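(* Let $\mathbf P$ be a collection of quartiles and let $\mathbf D$ be a collection of quartiles such that the tiles $\{Q_3:Q\in\mathbf D\}$ are pairwise disjoint. Let $\mathbf P':=\{P\in\mathbf P: P_1\le Q_3\text{ for some }Q\in\mathbf D\}$. Then for every pair $P\in\mathbf P$, $Q\in\mathbf D$ with $P_1\cap Q_3\ne\emptyset$ we have $\omega_{Q_3}\subseteq\omega_{P_1}$ if and only if $P\in\mathbf P'$.
   Context: A tile is a rectangle $I\times\omega$ of area one with $I,\omega$ dyadic intervals. A quartile is $P=I_P\times\omega_P=[2^{-k}n,2^{-k}(n+1))\times[2^{k+2}l,2^{k+2}(l+1))$ ($k,n\in\mathbb Z$, $l\ge0$ integers) with sub-tiles $P_i:=I_P\times[2^k(4l+i-1),2^k(4l+i))$, $i=1,2,3$; $\omega_{P_i}$ denotes the frequency interval of $P_i$. For tiles $P,P'$ write $P'<P$ if $I_{P'}\subsetneq I_P$ and $\omega_P\subseteq\omega_{P'}$, and $P'\le P$ if $P'<P$ or $P'=P$. *)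

theory Defs
  imports Complex_Main
begin

definition dint :: "int \<Rightarrow> int \<Rightarrow> real set" where
  "dint j m = {real_of_int m * 2 powr real_of_int j ..< real_of_int (m + 1) * 2 powr real_of_int j}"

text \<open>A tile is a pair (I, omega) of (dyadic) intervals; its point set is I \<times> omega.\<close>
type_synonym tile = "real set \<times> real set"

definition tile_set :: "tile \<Rightarrow> (real \<times> real) set" where
  "tile_set P = fst P \<times> snd P"

definition tile_less :: "tile \<Rightarrow> tile \<Rightarrow> bool" (infix "\<lless>" 50) where
  "P' \<lless> P \<longleftrightarrow> fst P' \<subset> fst P \<and> snd P \<subseteq> snd P'"

definition tile_le :: "tile \<Rightarrow> tile \<Rightarrow> bool" (infix "\<lless>=" 50) where
  "P' \<lless>= P \<longleftrightarrow> P' \<lless> P \<or> P' = P"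

text \<open>A quartile is given by its parameters (k, n, l), with l \<ge> 0:
  I_P = [2^{-k} n, 2^{-k}(n+1)), omega_P = [2^{k+2} l, 2^{k+2}(l+1)).\<close>
type_synonym quartile = "int \<times> int \<times> nat"

definition qI :: "quartile \<Rightarrow> real set" where
  "qI P = (case P of (k, n, l) \<Rightarrow> dint (- k) n)"

definition q\<omega> :: "quartile \<Rightarrow> real set" where
  "q\<omega> P = (case P of (k, n, l) \<Rightarrow> dint (k + 2) (int l))"

definition subtile :: "quartile \<Rightarrow> int \<Rightarrow> tile" where
  "subtile P i = (case P of (k, n, l) \<Rightarrow> (dint (- k) n, dint k (4 * int l + i - 1)))"

end

theory Submission imports Defs begin

text \<open>Both P_1 and Q_3 are tiles [2^{-k} n, 2^{-k}(n+1)) \<times> [2^k m, 2^k(m+1)). Since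
  dyadic intervals are nested or disjoint, two such tiles that meet are ordered: the one with
  the smaller scale k has the smaller frequency interval and the larger time interval. So
  omega_{Q_3} \<subseteq> omega_{P_1} gives P_1 \<le> Q_3. Conversely, if P_1 \<le> R_3 with R \<in> D but
  omega_{Q_3} is not contained in omega_{P_1}, then I_Q \<subseteq> I_P \<subseteq> I_R and
  omega_{R_3} \<subseteq> omega_{P_1} \<subseteq> omega_{Q_3}; hence Q_3 and R_3 meet but differ, contradicting the
  disjointness of the tiles Q_3 for Q \<in> D.\<close>

lemma mem_dint_iff: "x \<in> dint j m \<longleftrightarrow> \<lfloor>x / 2 powr j\<rfloor> = m"
  by (simp add: dint_def floor_eq_iff pos_le_divide_eq pos_divide_less_eq)

lemma floor_divide_powr_coarser:
  assumes "j \<le> j'"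
  shows "\<lfloor>x / 2 powr j'\<rfloor> = \<lfloor>x / 2 powr j\<rfloor> div 2 ^ nat (j' - j)"
proof -
  have "2 powr j' = 2 powr j * 2 powr (j' - j)"
    by (simp flip: powr_add)
  also have "2 powr (j' - j) = 2 powr real (nat (j' - j))"
    using assms by simp
  also have "\<dots> = real_of_int (2 ^ nat (j' - j))"
    by (simp add: powr_realpow)
  finally have "x / 2 powr j' = (x / 2 powr j) / real_of_int (2 ^ nat (j' - j))"
    by simp
  then show ?thesis
    by (metis floor_divide_real_eq_div zero_le_numeral zero_le_power)
qed

lemma dint_nonempty: "dint j m \<noteq> {}"
  by (simp add: dint_def)

lemma dint_subset_if_le:
  assumes "j \<le> j'" and "dint j m \<inter> dint j' m' \<noteq> {}"
  shows "dint j m \<subseteq> dint j' m'"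
proof
  obtain x where "x \<in> dint j m" "x \<in> dint j' m'"
    using assms(2) by blast
  then have "m div 2 ^ nat (j' - j) = m'"
    using floor_divide_powr_coarser[OF assms(1)] by (simp add: mem_dint_iff)
  moreover fix z assume "z \<in> dint j m"
  ultimately show "z \<in> dint j' m'"
    using floor_divide_powr_coarser[OF assms(1)] by (simp add: mem_dint_iff)
qed

lemma dint_eq_iff: "dint j m = dint j' m' \<longleftrightarrow> j = j' \<and> m = m'"
proof
  assume "dint j m = dint j' m'"
  then have "real_of_int m * 2 powr j = real_of_int m' * 2 powr j'"
       "real_of_int (m + 1) * 2 powr j = real_of_int (m' + 1) * 2 powr j'"
    using dint_nonempty[of j m] unfolding dint_def by (simp_all add: atLeastLessThan_eq_iff)
  then have "2 powr j = 2 powr j'"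
    by (simp add: algebra_simps)
  then show "j = j' \<and> m = m'"
    using \<open>real_of_int m * 2 powr j = _\<close> powr_inj[of 2 j j'] by simp
qed simp

lemma dint_subset_imp_le:
  assumes "dint j m \<subseteq> dint j' m'"
  shows "j \<le> j'"
proof (rule ccontr)
  assume "\<not> j \<le> j'"
  moreover have "dint j' m' \<inter> dint j m \<noteq> {}"
    using assms dint_nonempty[of j m] by blast
  ultimately have "dint j' m' \<subseteq> dint j m"
    by (simp add: dint_subset_if_le)
  with assms have "dint j m = dint j' m'" by blast
  with \<open>\<not> j \<le> j'\<close> show False
    by (simp add: dint_eq_iff)
qed

definition dyadic_tile :: "int \<Rightarrow> int \<Rightarrow> int \<Rightarrow> tile" where
  "dyadic_tile k n m = (dint (- k) n, dint k m)"

lemma fst_dyadic_tile [simp]: "fst (dyadic_tile k n m) = dint (- k) n"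
  and snd_dyadic_tile [simp]: "snd (dyadic_tile k n m) = dint k m"
  by (simp_all add: dyadic_tile_def)

lemma subtile_eq_dyadic_tile: "subtile (k, n, l) i = dyadic_tile k n (4 * int l + i - 1)"
  by (simp add: subtile_def dyadic_tile_def)

lemma dyadic_tiles_meet_imp_nested:
  assumes "tile_set (dyadic_tile k n m) \<inter> tile_set (dyadic_tile k' n' m') \<noteq> {}" and "k \<le> k'"
  shows "dint k m \<subseteq> dint k' m'" and "dint (- k') n' \<subseteq> dint (- k) n"
proof -
  have "dint (- k') n' \<inter> dint (- k) n \<noteq> {}" and "dint k m \<inter> dint k' m' \<noteq> {}"
    using assms(1) by (auto simp: tile_set_def dyadic_tile_def)
  then show "dint k m \<subseteq> dint k' m'" and "dint (- k') n' \<subseteq> dint (- k) n"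
    using assms(2) by (simp_all add: dint_subset_if_le)
qed

lemma dyadic_tile_le_if_freq_subset:
  assumes meet: "tile_set (dyadic_tile k n m) \<inter> tile_set (dyadic_tile k' n' m') \<noteq> {}"
    and freq: "dint k' m' \<subseteq> dint k m"
  shows "dyadic_tile k n m \<lless>= dyadic_tile k' n' m'"
proof -
  have "tile_set (dyadic_tile k' n' m') \<inter> tile_set (dyadic_tile k n m) \<noteq> {}"
    using meet by blast
  moreover have "k' \<le> k"
    using freq by (rule dint_subset_imp_le)
  ultimately have space: "dint (- k) n \<subseteq> dint (- k') n'"
    by (rule dyadic_tiles_meet_imp_nested)
  show ?thesis
  proof (cases "dint (- k) n = dint (- k') n'")
    case True
    then have "k = k'" and "n = n'"
      by (simp_all add: dint_eq_iff)
    with meet have "dint k m \<subseteq> dint k' m'"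
      by (simp add: dyadic_tiles_meet_imp_nested)
    with freq \<open>k = k'\<close> \<open>n = n'\<close> show ?thesis
      by (simp add: tile_le_def dyadic_tile_def)
  next
    case False
    with space freq show ?thesis
      by (auto simp: tile_le_def tile_less_def dyadic_tile_def)
  qed
qed

lemma dyadic_tile_meet_above_if_not_freq_subset:
  assumes le: "dyadic_tile k n m \<lless>= R"
    and meet: "tile_set (dyadic_tile k n m) \<inter> tile_set (dyadic_tile k' n' m') \<noteq> {}"
    and not_freq: "\<not> dint k' m' \<subseteq> dint k m"
    and "snd R \<noteq> {}"
  shows "tile_set (dyadic_tile k' n' m') \<inter> tile_set R \<noteq> {}" and "dyadic_tile k' n' m' \<noteq> R"
proof -
  have "k \<le> k'"
  proof (rule ccontr)
    assume "\<not> k \<le> k'"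
    with meet have "dint k' m' \<subseteq> dint k m"
      by (simp add: dyadic_tiles_meet_imp_nested Int_commute)
    with not_freq show False ..
  qed
  with meet have "dint k m \<subseteq> dint k' m'" and "dint (- k') n' \<subseteq> dint (- k) n"
    by (rule dyadic_tiles_meet_imp_nested)+
  moreover have "dint (- k) n \<subseteq> fst R" and "snd R \<subseteq> dint k m"
    using le by (auto simp: tile_le_def tile_less_def dyadic_tile_def)
  ultimately have "dint (- k') n' \<times> snd R \<subseteq> tile_set (dyadic_tile k' n' m') \<inter> tile_set R"
    by (auto simp: tile_set_def dyadic_tile_def)
  then show "tile_set (dyadic_tile k' n' m') \<inter> tile_set R \<noteq> {}"
    using \<open>snd R \<noteq> {}\<close> dint_nonempty by blast
  show "dyadic_tile k' n' m' \<noteq> R"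
    using \<open>snd R \<subseteq> dint k m\<close> not_freq by (auto simp: dyadic_tile_def)
qed

theorem lemma6p1:
  fixes \<P> \<D> :: "quartile set"
  assumes disj: "\<forall>Q\<in>\<D>. \<forall>Q'\<in>\<D>. subtile Q 3 \<noteq> subtile Q' 3 \<longrightarrow>
                   tile_set (subtile Q 3) \<inter> tile_set (subtile Q' 3) = {}"
  defines "\<P>' \<equiv> {P \<in> \<P>. \<exists>Q\<in>\<D>. subtile P 1 \<lless>= subtile Q 3}"
  shows "\<forall>P\<in>\<P>. \<forall>Q\<in>\<D>. tile_set (subtile P 1) \<inter> tile_set (subtile Q 3) \<noteq> {} \<longrightarrow>
           (snd (subtile Q 3) \<subseteq> snd (subtile P 1) \<longleftrightarrow> P \<in> \<P>')"
proof (intro ballI impI)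
  fix P Q
  assume "P \<in> \<P>" and "Q \<in> \<D>" and meet: "tile_set (subtile P 1) \<inter> tile_set (subtile Q 3) \<noteq> {}"
  obtain k n l k' n' l' where P: "P = (k, n, l)" and Q: "Q = (k', n', l')"
    by (metis prod_cases3)
  note tiles = P Q subtile_eq_dyadic_tile
  show "snd (subtile Q 3) \<subseteq> snd (subtile P 1) \<longleftrightarrow> P \<in> \<P>'"
  proof
    assume "snd (subtile Q 3) \<subseteq> snd (subtile P 1)"
    with meet have "subtile P 1 \<lless>= subtile Q 3"
      by (simp add: tiles dyadic_tile_le_if_freq_subset)
    with \<open>P \<in> \<P>\<close> \<open>Q \<in> \<D>\<close> show "P \<in> \<P>'"
      unfolding \<P>'_def by blast
  next
    assume "P \<in> \<P>'"
    then obtain R where "R \<in> \<D>" and le: "subtile P 1 \<lless>= subtile R 3"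
      unfolding \<P>'_def by blast
    have "snd (subtile R 3) \<noteq> {}"
      by (cases R) (simp add: subtile_eq_dyadic_tile dint_nonempty)
    show "snd (subtile Q 3) \<subseteq> snd (subtile P 1)"
    proof (rule ccontr)
      assume "\<not> snd (subtile Q 3) \<subseteq> snd (subtile P 1)"
      with le meet \<open>snd (subtile R 3) \<noteq> {}\<close>
      have "tile_set (subtile Q 3) \<inter> tile_set (subtile R 3) \<noteq> {}" and "subtile Q 3 \<noteq> subtile R 3"
        by (simp_all add: tiles dyadic_tile_meet_above_if_not_freq_subset)
      with disj \<open>Q \<in> \<D>\<close> \<open>R \<in> \<D>\<close> show False
        by blast
    qed
  qed
qed

end
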